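(* Let $M\colon\mathbb{R}^2\to\mathbf{Vec}$ be a persistence module such that for every $(i,j)\in\mathbb{Z}^2$ the restriction $M|_{[i,i+1]\times[j,j+1]}$ is middle exact. Then $M$ is middle exact.
   Context: $\mathbb{R}^2$ and its subsets carry the product order. A module $M$ over $Q\subseteq\mathbb{R}^2$ is middle exact if for all $x\le x'$, $y\le y'$ with $a=(x,y),b=(x,y'),c=(x',y),d=(x',y')$ all in $Q$, the sequence $M_a\xrightarrow{(M(a\le b),M(a\le c))}M_b\oplus M_c\xrightarrow{M(b\le d)-M(c\le d)}M_d$ is exact at the middle. *)

theory Defs
  imports Main "HOL-Analysis.Analysis"
begin

definition le2 :: "real \<times> real \<Rightarrow> real \<times> real \<Rightarrow> bool" where
  "le2 a b \<longleftrightarrow> fst a \<le> fst b \<and> snd a \<le> snd b"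

text \<open>All spaces M_a are realised as subspaces V a of one ambient 'k-vector space 'v
  (scalar multiplication s); the structure map M(a \<le> b) is F a b, which is required
  to be linear from V a to V b.\<close>
definition pers_module ::
  "('k::field \<Rightarrow> 'v::ab_group_add \<Rightarrow> 'v) \<Rightarrow> (real \<times> real) set \<Rightarrow>
   (real \<times> real \<Rightarrow> 'v set) \<Rightarrow> (real \<times> real \<Rightarrow> real \<times> real \<Rightarrow> 'v \<Rightarrow> 'v) \<Rightarrow> bool" where
  "pers_module s Q V F \<longleftrightarrow>
     vector_space s \<and>
     (\<forall>a\<in>Q. module.subspace s (V a)) \<and>
     (\<forall>a\<in>Q. \<forall>b\<in>Q. le2 a b \<longrightarrow>
        (\<forall>x\<in>V a. F a b x \<in> V b) \<and>
        (\<forall>x\<in>V a. \<forall>y\<in>V a. F a b (x + y) = F a b x + F a b y) \<and>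
        (\<forall>c. \<forall>x\<in>V a. F a b (s c x) = s c (F a b x))) \<and>
     (\<forall>a\<in>Q. \<forall>x\<in>V a. F a a x = x) \<and>
     (\<forall>a\<in>Q. \<forall>b\<in>Q. \<forall>c\<in>Q. le2 a b \<longrightarrow> le2 b c \<longrightarrow>
        (\<forall>x\<in>V a. F b c (F a b x) = F a c x))"

text \<open>Middle exactness of the module (V,F) restricted to Q: for every square
  a=(x,y), b=(x,y'), c=(x',y), d=(x',y') in Q with x \<le> x', y \<le> y', the sequence
  M_a \<rightarrow> M_b \<oplus> M_c \<rightarrow> M_d is exact at M_b \<oplus> M_c.\<close>
definition middle_exact ::
  "(real \<times> real) set \<Rightarrow> (real \<times> real \<Rightarrow> 'v::ab_group_add set) \<Rightarrow>
   (real \<times> real \<Rightarrow> real \<times> real \<Rightarrow> 'v \<Rightarrow> 'v) \<Rightarrow> bool" where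
  "middle_exact Q V F \<longleftrightarrow>
     (\<forall>x x' y y'. x \<le> x' \<longrightarrow> y \<le> y' \<longrightarrow>
        (x, y) \<in> Q \<longrightarrow> (x, y') \<in> Q \<longrightarrow> (x', y) \<in> Q \<longrightarrow> (x', y') \<in> Q \<longrightarrow>
        (let a = (x, y); b = (x, y'); c = (x', y); d = (x', y') in
          (\<lambda>u. (F a b u, F a c u)) ` V a =
          {(v, w). v \<in> V b \<and> w \<in> V c \<and> F b d v - F c d w = 0}))"

definition unit_square :: "int \<Rightarrow> int \<Rightarrow> (real \<times> real) set" where
  "unit_square i j = {real_of_int i .. real_of_int i + 1} \<times> {real_of_int j .. real_of_int j + 1}"

end

theory Submission
  imports Defs
begin

text \<open>By functoriality only the surjectivity half of middle exactness carries content: a pair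
  in M_b \<oplus> M_c with equal images in M_d must lift to M_a. This lifting property glues along
  a common edge: lift on one rectangle, then lift the resulting element on the adjacent one.
  Transposing the plane turns horizontal gluing into vertical gluing. The integer grid cuts
  every rectangle into finitely many pieces, each inside a unit square, so the hypothesis on
  unit squares propagates to all rectangles.\<close>

definition functorial ::
  "(real \<times> real \<Rightarrow> 'v set) \<Rightarrow> (real \<times> real \<Rightarrow> real \<times> real \<Rightarrow> 'v \<Rightarrow> 'v) \<Rightarrow> bool" where
  "functorial V F \<longleftrightarrow>
     (\<forall>a b x. le2 a b \<longrightarrow> x \<in> V a \<longrightarrow> F a b x \<in> V b) \<and>
     (\<forall>a b c x. le2 a b \<longrightarrow> le2 b c \<longrightarrow> x \<in> V a \<longrightarrow> F b c (F a b x) = F a c x)"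

definition square_exact ::
  "(real \<times> real \<Rightarrow> 'v set) \<Rightarrow> (real \<times> real \<Rightarrow> real \<times> real \<Rightarrow> 'v \<Rightarrow> 'v) \<Rightarrow>
   real \<Rightarrow> real \<Rightarrow> real \<Rightarrow> real \<Rightarrow> bool" where
  "square_exact V F x x' y y' \<longleftrightarrow>
     (\<forall>v\<in>V (x, y'). \<forall>w\<in>V (x', y). F (x, y') (x', y') v = F (x', y) (x', y') w \<longrightarrow>
        (\<exists>u\<in>V (x, y). F (x, y) (x, y') u = v \<and> F (x, y) (x', y) u = w))"

lemma pers_module_functorial:
  assumes "pers_module s UNIV V F"
  shows "functorial V F"
  using assms unfolding pers_module_def functorial_def by blast

lemma functorial_mapsto:
  "functorial V F \<Longrightarrow> le2 a b \<Longrightarrow> x \<in> V a \<Longrightarrow> F a b x \<in> V b"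
  unfolding functorial_def by blast

lemma functorial_comp:
  "functorial V F \<Longrightarrow> le2 a b \<Longrightarrow> le2 b c \<Longrightarrow> x \<in> V a \<Longrightarrow> F b c (F a b x) = F a c x"
  unfolding functorial_def by blast

lemma le2_swap_iff [simp]: "le2 (prod.swap a) (prod.swap b) \<longleftrightarrow> le2 a b"
  unfolding le2_def by auto

lemma functorial_transpose:
  assumes "functorial V F"
  shows "functorial (\<lambda>p. V (prod.swap p)) (\<lambda>a b. F (prod.swap a) (prod.swap b))"
  using assms unfolding functorial_def by (metis le2_swap_iff)

lemma square_exact_transpose:
  "square_exact V F x x' y y' \<longleftrightarrow>
   square_exact (\<lambda>p. V (prod.swap p)) (\<lambda>a b. F (prod.swap a) (prod.swap b)) y y' x x'"
  unfolding square_exact_def by (simp add: eq_commute[of "F (x, y') (x', y') _"]) blast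

lemma square_exact_glue_horizontal:
  assumes F: "functorial V F"
    and le: "x0 \<le> x1" "x1 \<le> x2" "y \<le> y'"
    and left: "square_exact V F x0 x1 y y'" and right: "square_exact V F x1 x2 y y'"
  shows "square_exact V F x0 x2 y y'"
  unfolding square_exact_def
proof (intro ballI impI)
  fix v w assume v: "v \<in> V (x0, y')" and w: "w \<in> V (x2, y)"
    and vw: "F (x0, y') (x2, y') v = F (x2, y) (x2, y') w"
  define v' where "v' = F (x0, y') (x1, y') v"
  have v': "v' \<in> V (x1, y')"
    unfolding v'_def using functorial_mapsto[OF F] v le by (simp add: le2_def)
  have "F (x1, y') (x2, y') v' = F (x2, y) (x2, y') w"
    unfolding v'_def using functorial_comp[OF F] v le vw by (simp add: le2_def)
  then obtain u' where u': "u' \<in> V (x1, y)" "F (x1, y) (x1, y') u' = v'" "F (x1, y) (x2, y) u' = w"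
    using right v' w unfolding square_exact_def by blast
  have "F (x0, y') (x1, y') v = F (x1, y) (x1, y') u'"
    using u'(2) unfolding v'_def by simp
  then obtain u where u: "u \<in> V (x0, y)" "F (x0, y) (x0, y') u = v" "F (x0, y) (x1, y) u = u'"
    using left v u'(1) unfolding square_exact_def by blast
  have "F (x0, y) (x2, y) u = F (x1, y) (x2, y) (F (x0, y) (x1, y) u)"
    using functorial_comp[OF F] u(1) le by (simp add: le2_def)
  with u u' show "\<exists>u\<in>V (x0, y). F (x0, y) (x0, y') u = v \<and> F (x0, y) (x2, y) u = w"
    by auto
qed

lemma square_exact_glue_vertical:
  assumes "functorial V F"
    and "y0 \<le> y1" "y1 \<le> y2" "x \<le> x'"
    and "square_exact V F x x' y0 y1" "square_exact V F x x' y1 y2"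
  shows "square_exact V F x x' y0 y2"
  using assms square_exact_glue_horizontal[OF functorial_transpose]
  by (simp add: square_exact_transpose[of V F x x'])

lemma square_exact_iff_image_eq:
  assumes F: "functorial V F" and "x \<le> x'" "y \<le> y'"
  shows "square_exact V F x x' y y' \<longleftrightarrow>
    (\<lambda>u. (F (x, y) (x, y') u, F (x, y) (x', y) u)) ` V (x, y) =
      {(v, w). v \<in> V (x, y') \<and> w \<in> V (x', y) \<and> F (x, y') (x', y') v = F (x', y) (x', y') w}"
    (is "_ \<longleftrightarrow> ?image = ?kernel")
proof -
  have "?image \<subseteq> ?kernel"
  proof (rule image_subsetI)
    fix u assume "u \<in> V (x, y)"
    then show "(F (x, y) (x, y') u, F (x, y) (x', y) u) \<in> ?kernel"
      using functorial_mapsto[OF F] functorial_comp[OF F] assms(2,3) by (simp add: le2_def)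
  qed
  moreover have "?kernel \<subseteq> ?image \<longleftrightarrow> square_exact V F x x' y y'"
    unfolding square_exact_def subset_iff image_iff by blast
  ultimately show ?thesis by blast
qed

lemma middle_exact_iff_square_exact:
  assumes "functorial V F"
  shows "middle_exact Q V F \<longleftrightarrow>
    (\<forall>x x' y y'. x \<le> x' \<longrightarrow> y \<le> y' \<longrightarrow>
       (x, y) \<in> Q \<longrightarrow> (x, y') \<in> Q \<longrightarrow> (x', y) \<in> Q \<longrightarrow> (x', y') \<in> Q \<longrightarrow>
       square_exact V F x x' y y')"
  unfolding middle_exact_def Let_def right_minus_eq
  by (intro iff_allI imp_cong refl) (simp add: square_exact_iff_image_eq[OF assms])

lemma real_le_glue_unit_intervals:
  fixes P :: "real \<Rightarrow> real \<Rightarrow> bool"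
  assumes unit: "\<And>x x'. x \<le> x' \<Longrightarrow> x' \<le> of_int \<lfloor>x\<rfloor> + 1 \<Longrightarrow> P x x'"
    and glue: "\<And>x y z. x \<le> y \<Longrightarrow> y \<le> z \<Longrightarrow> P x y \<Longrightarrow> P y z \<Longrightarrow> P x z"
    and "x \<le> x'"
  shows "P x x'"
proof -
  have steps: "P x x'" if "x \<le> x'" "x' \<le> of_int \<lfloor>x\<rfloor> + real n + 1" for n :: nat and x x'
    using that
  proof (induction n arbitrary: x)
    case 0
    then show ?case using unit by simp
  next
    case (Suc n)
    define x1 where "x1 = of_int \<lfloor>x\<rfloor> + (1::real)"
    show ?case
    proof (cases "x' \<le> x1")
      case True
      then show ?thesis using unit Suc.prems x1_def by blast
    next
      case False
      have "\<lfloor>x1\<rfloor> = \<lfloor>x\<rfloor> + 1" "x \<le> x1" unfolding x1_def by linarith+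
      then have "P x1 x'" using Suc False x1_def by simp
      moreover have "P x x1" using unit[of x x1] \<open>x \<le> x1\<close> x1_def by simp
      ultimately show ?thesis using glue \<open>x \<le> x1\<close> False by simp
    qed
  qed
  obtain n :: nat where "x' - of_int \<lfloor>x\<rfloor> \<le> real n"
    using real_arch_simple by blast
  then show ?thesis using steps[of x x' n] \<open>x \<le> x'\<close> by simp
qed

lemma square_exact_of_unit_squares:
  assumes F: "functorial V F"
    and unit: "\<And>x x' y y'. x \<le> x' \<Longrightarrow> x' \<le> of_int \<lfloor>x\<rfloor> + 1 \<Longrightarrow>
      y \<le> y' \<Longrightarrow> y' \<le> of_int \<lfloor>y\<rfloor> + 1 \<Longrightarrow> square_exact V F x x' y y'"
    and "x \<le> x'" "y \<le> y'"
  shows "square_exact V F x x' y y'"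
proof -
  have strip: "square_exact V F x x' y y'" if "x \<le> x'" "y \<le> y'" "y' \<le> of_int \<lfloor>y\<rfloor> + 1"
    for x x' y y'
  proof (rule real_le_glue_unit_intervals[where P = "\<lambda>a b. square_exact V F a b y y'", OF _ _ that(1)])
    show "square_exact V F a b y y'" if "a \<le> b" "b \<le> of_int \<lfloor>a\<rfloor> + 1" for a b
      using unit[OF that] \<open>y \<le> y'\<close> \<open>y' \<le> of_int \<lfloor>y\<rfloor> + 1\<close> by simp
    show "square_exact V F a c y y'"
      if "a \<le> b" "b \<le> c" "square_exact V F a b y y'" "square_exact V F b c y y'" for a b c
      using square_exact_glue_horizontal[OF F that(1,2) \<open>y \<le> y'\<close> that(3,4)] .
  qed
  have "\<forall>x x'. x \<le> x' \<longrightarrow> square_exact V F x x' y y'"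
  proof (rule real_le_glue_unit_intervals[where P = "\<lambda>a b. \<forall>x x'. x \<le> x' \<longrightarrow> square_exact V F x x' a b",
        OF _ _ \<open>y \<le> y'\<close>])
    show "\<forall>x x'. x \<le> x' \<longrightarrow> square_exact V F x x' a b"
      if "a \<le> b" "b \<le> of_int \<lfloor>a\<rfloor> + 1" for a b
      using strip that by simp
    show "\<forall>x x'. x \<le> x' \<longrightarrow> square_exact V F x x' a c"
      if "a \<le> b" "b \<le> c" "\<forall>x x'. x \<le> x' \<longrightarrow> square_exact V F x x' a b"
        "\<forall>x x'. x \<le> x' \<longrightarrow> square_exact V F x x' b c" for a b c
      using square_exact_glue_vertical[OF F that(1,2)] that(3,4) by simp
  qed
  with \<open>x \<le> x'\<close> show ?thesis by simp
qed

theorem lemma5p10: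
  fixes s :: "'k::field \<Rightarrow> 'v::ab_group_add \<Rightarrow> 'v"
    and V :: "real \<times> real \<Rightarrow> 'v set"
    and F :: "real \<times> real \<Rightarrow> real \<times> real \<Rightarrow> 'v \<Rightarrow> 'v"
  assumes "pers_module s UNIV V F"
    and "\<forall>i j :: int. middle_exact (unit_square i j) V F"
  shows "middle_exact UNIV V F"
proof -
  have F: "functorial V F" using assms(1) by (rule pers_module_functorial)
  have unit: "square_exact V F x x' y y'"
    if "x \<le> x'" "x' \<le> of_int \<lfloor>x\<rfloor> + 1" "y \<le> y'" "y' \<le> of_int \<lfloor>y\<rfloor> + 1" for x x' y y'
  proof -
    have "middle_exact (unit_square \<lfloor>x\<rfloor> \<lfloor>y\<rfloor>) V F" using assms(2) by blast
    moreover have "(x, y) \<in> unit_square \<lfloor>x\<rfloor> \<lfloor>y\<rfloor>" "(x, y') \<in> unit_square \<lfloor>x\<rfloor> \<lfloor>y\<rfloor>"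
      "(x', y) \<in> unit_square \<lfloor>x\<rfloor> \<lfloor>y\<rfloor>" "(x', y') \<in> unit_square \<lfloor>x\<rfloor> \<lfloor>y\<rfloor>"
      using that unfolding unit_square_def by (auto, linarith+)
    ultimately show ?thesis
      using that unfolding middle_exact_iff_square_exact[OF F] by simp
  qed
  then show ?thesis
    unfolding middle_exact_iff_square_exact[OF F] using square_exact_of_unit_squares[OF F] by simp
qed

end
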